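(* Consider a population of $N$ units, $M$ of which have a certain attribute, and a positive integer $r\le M$. Units are sampled without replacement until $r$ units with the attribute are observed; let $\boldsymbol n$ be the number of units checked, so that $\Pr\{\boldsymbol n=n\mid M\}=\binom{n-1}{r-1}\binom{N-n}{M-r}/\binom NM$ for $r\le n\le N$. Let $I_{\boldsymbol n}$ be the support of $\boldsymbol n$, and let $\widehat M=\widehat M(n)$ be a function of $n\in I_{\boldsymbol n}$ taking values in $\{m\in\mathbb{Z}:r\le m\le N\}$. Then $$\Pr\{\boldsymbol n\le n\mid M\}\le\frac{\binom N{\widehat M}\binom{N-n}{M-r}}{\binom NM\binom{N-n}{\widehat M-r}}=\frac{\binom Mr\binom{N-M}{n-r}}{\binom{\widehat M}r\binom{N-\widehat M}{n-r}}\quad\text{for } n\in I_{\boldsymbol n}\text{ such that }\widehat M(n)\ge M,$$ $$\Pr\{\boldsymbol n\ge n\mid M\}\le\frac{\binom N{\widehat M}\binom{N-n}{M-r}}{\binom NM\binom{N-n}{\widehat M-r}}=\frac{\binom Mr\binom{N-M}{n-r}}{\binom{\widehat M}r\binom{N-\widehat M}{n-r}}\quad\text{for } n\in I_{\boldsymbol n}\text{ such that }\widehat M(n)\le M.$$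
   Context: $\Pr\{\cdot\mid M\}$ denotes probability when the population contains $M$ units with the attribute. *)

theory Defs
  imports Complex_Main
begin

definition inv_hyp_pmf :: "nat \<Rightarrow> nat \<Rightarrow> nat \<Rightarrow> nat \<Rightarrow> real" where
  "inv_hyp_pmf N M r k =
     (if r \<le> k \<and> k \<le> N
      then real ((k - 1) choose (r - 1)) * real ((N - k) choose (M - r)) / real (N choose M)
      else 0)"

definition inv_hyp_support :: "nat \<Rightarrow> nat \<Rightarrow> nat \<Rightarrow> nat set" where
  "inv_hyp_support N M r = {k. inv_hyp_pmf N M r k > 0}"

definition inv_hyp_le :: "nat \<Rightarrow> nat \<Rightarrow> nat \<Rightarrow> nat \<Rightarrow> real" where
  "inv_hyp_le N M r k = (\<Sum>j\<in>{..k}. inv_hyp_pmf N M r j)"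

definition inv_hyp_ge :: "nat \<Rightarrow> nat \<Rightarrow> nat \<Rightarrow> nat \<Rightarrow> real" where
  "inv_hyp_ge N M r k = (\<Sum>j\<in>{k..N}. inv_hyp_pmf N M r j)"

end

theory Submission imports Defs begin

text \<open>For \<open>M \<le> M'\<close> the likelihood ratio \<open>f(k | M) / f(k | M')\<close> of the inverse hypergeometric
  distribution is nonincreasing in \<open>k\<close>. Hence \<open>f(j | M) \<le> f(j | M') f(n | M) / f(n | M')\<close> for
  \<open>j \<le> n\<close>, and summing over \<open>j \<le> n\<close> against the total mass \<open>1\<close> of \<open>f(\<cdot> | M')\<close> bounds the
  lower tail \<open>Pr{n \<le> n | M}\<close> by \<open>f(n | M) / f(n | M')\<close>; symmetrically for the upper tail when
  \<open>M' \<le> M\<close>. Taking \<open>M'\<close> to be the estimate \<open>Mhat n\<close> and rewriting the ratio with the identity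
  \<open>C(N,m) C(m,r) C(N-m,n-r) = C(N,n) C(n,r) C(N-n,m-r)\<close> gives both closed forms.\<close>

lemma sum_choose_mult_choose_upper:
  "(\<Sum>i\<le>n. (i choose a) * ((n - i) choose b)) = Suc n choose (a + b + 1)"
proof (induction n arbitrary: b)
  case 0
  then show ?case by (cases a; cases b) auto
next
  case (Suc n)
  show ?case
  proof (cases b)
    case 0
    then show ?thesis using sum_choose_upper[where m=a and n="Suc n"] by simp
  next
    case (Suc c)
    have "(\<Sum>i\<le>Suc n. (i choose a) * ((Suc n - i) choose b))
        = (\<Sum>i\<le>n. (i choose a) * ((Suc n - i) choose b))"
      using Suc by simp
    also have "\<dots> = (\<Sum>i\<le>n. (i choose a) * ((n - i) choose b) + (i choose a) * ((n - i) choose c))"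
      by (rule sum.cong) (auto simp: Suc Suc_diff_le algebra_simps)
    also have "\<dots> = (Suc n choose (a + b + 1)) + (Suc n choose (a + c + 1))"
      by (simp add: sum.distrib Suc.IH)
    also have "\<dots> = Suc (Suc n) choose (a + b + 1)"
      using Suc by simp
    finally show ?thesis .
  qed
qed

lemma choose_mult_choose_diff_commute:
  "(A choose a) * ((A - a) choose b) = (A choose b) * ((A - b) choose a)"
proof (cases "a + b \<le> A")
  case True
  have "(A choose a) * ((A - a) choose b) = (A choose (a + b)) * ((a + b) choose a)"
    using choose_mult[of a "a + b" A] True by simp
  also have "\<dots> = (A choose (a + b)) * ((a + b) choose b)"
    using binomial_symmetric[of a "a + b"] by simp
  also have "\<dots> = (A choose b) * ((A - b) choose a)"
    using choose_mult[of b "a + b" A] True by simp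
  finally show ?thesis .
next
  case False
  then have "(A choose a) * ((A - a) choose b) = 0" "(A choose b) * ((A - b) choose a) = 0"
    by (cases "a \<le> A"; cases "b \<le> A"; simp)+
  then show ?thesis by (simp only:)
qed

lemma choose_mult_choose_mult_swap:
  assumes "r \<le> m" "m \<le> N" "r \<le> n" "n \<le> N"
  shows "(N choose m) * (m choose r) * ((N - m) choose (n - r))
       = (N choose n) * (n choose r) * ((N - n) choose (m - r))"
proof -
  have "N - r - (m - r) = N - m" "N - r - (n - r) = N - n"
    using assms by auto
  then have "((N - r) choose (m - r)) * ((N - m) choose (n - r))
           = ((N - r) choose (n - r)) * ((N - n) choose (m - r))"
    using choose_mult_choose_diff_commute[of "N - r" "m - r" "n - r"] by simp
  moreover have "(N choose m) * (m choose r) = (N choose r) * ((N - r) choose (m - r))"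
    "(N choose n) * (n choose r) = (N choose r) * ((N - r) choose (n - r))"
    using choose_mult[of r m N] choose_mult[of r n N] assms by simp_all
  ultimately show ?thesis by (simp add: mult.assoc)
qed

lemma choose_mult_choose_mono:
  assumes "x \<le> y" "s \<le> g"
  shows "(g choose x) * (s choose y) \<le> (s choose x) * (g choose y)"
proof (cases "y \<le> s")
  case False
  then show ?thesis by (simp add: not_le binomial_eq_0)
next
  case True
  from \<open>s \<le> g\<close> show ?thesis
  proof (induction g rule: dec_induct)
    case base
    then show ?case by simp
  next
    case (step g)
    \<comment> \<open>multiply by \<open>(Suc g - x) * (Suc g - y)\<close>, absorb, and use \<open>Suc g - y \<le> Suc g - x\<close>\<close>
    define u where "u = Suc g choose x"
    define v where "v = Suc g choose y"
    have hu: "(Suc g - x) * u = Suc g * (g choose x)"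
      unfolding u_def using binomial_absorb_comp[of "Suc g" x] by simp
    have hv: "(Suc g - y) * v = Suc g * (g choose y)"
      unfolding v_def using binomial_absorb_comp[of "Suc g" y] by simp
    have "(u * (s choose y)) * ((Suc g - x) * (Suc g - y))
        = ((Suc g - x) * u) * (s choose y) * (Suc g - y)"
      by (simp only: ac_simps)
    also have "\<dots> = Suc g * ((g choose x) * (s choose y)) * (Suc g - y)"
      unfolding hu by (simp only: ac_simps)
    also have "\<dots> \<le> Suc g * ((s choose x) * (g choose y)) * (Suc g - x)"
      using assms(1) by (intro mult_le_mono mult_le_mono2 step.IH) simp
    also have "\<dots> = (s choose x) * ((Suc g - y) * v) * (Suc g - x)"
      unfolding hv by (simp only: ac_simps)
    also have "\<dots> = ((s choose x) * v) * ((Suc g - x) * (Suc g - y))"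
      by (simp only: ac_simps)
    finally have "u * (s choose y) \<le> (s choose x) * v"
      using True assms step.hyps by simp
    then show ?case unfolding u_def v_def .
  qed
qed

lemma sum_le_divide_if_cross_le:
  fixes p q :: "'a \<Rightarrow> real"
  assumes "q k > 0" "p k \<ge> 0" "sum q A \<le> 1"
    and cross: "\<And>j. j \<in> A \<Longrightarrow> p j * q k \<le> p k * q j"
  shows "sum p A \<le> p k / q k"
proof -
  have "sum p A * q k = (\<Sum>j\<in>A. p j * q k)"
    by (simp add: sum_distrib_right)
  also have "\<dots> \<le> (\<Sum>j\<in>A. p k * q j)"
    by (rule sum_mono) (rule cross)
  also have "\<dots> = p k * sum q A"
    by (simp add: sum_distrib_left)
  also have "\<dots> \<le> p k"
    using assms mult_left_mono[of "sum q A" 1 "p k"] by simp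
  finally show ?thesis
    using assms by (simp add: pos_le_divide_eq)
qed

lemma inv_hyp_pmf_nonneg: "inv_hyp_pmf N m r k \<ge> 0"
  by (simp add: inv_hyp_pmf_def)

lemma inv_hyp_pmf_pos_iff:
  "inv_hyp_pmf N m r k > 0 \<longleftrightarrow> r \<le> k \<and> k \<le> N \<and> m \<le> N \<and> m - r \<le> N - k"
  by (auto simp: inv_hyp_pmf_def zero_less_divide_iff zero_less_mult_iff)

lemma sum_inv_hyp_pmf:
  assumes "0 < r" "r \<le> m" "m \<le> N"
  shows "(\<Sum>k\<le>N. inv_hyp_pmf N m r k) = 1"
proof -
  have N: "1 \<le> N"
    using assms by simp
  have "(\<Sum>k\<le>N. inv_hyp_pmf N m r k) = (\<Sum>k\<in>{1..N}. inv_hyp_pmf N m r k)"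
    using assms by (simp add: atMost_atLeast0 sum.atLeast_Suc_atMost inv_hyp_pmf_def)
  also have "\<dots> = (\<Sum>i<N. inv_hyp_pmf N m r (Suc i))"
    by (rule sum_bounds_lt_plus1[symmetric])
  also have "\<dots> = (\<Sum>i\<le>N - 1. real (i choose (r - 1)) * real ((N - 1 - i) choose (m - r)))
                  / real (N choose m)"
  proof -
    have "inv_hyp_pmf N m r (Suc i)
        = real (i choose (r - 1)) * real ((N - 1 - i) choose (m - r)) / real (N choose m)"
      if "i < N" for i
      using that by (cases "r \<le> Suc i") (simp_all add: inv_hyp_pmf_def binomial_eq_0)
    then have "(\<Sum>i<N. inv_hyp_pmf N m r (Suc i))
        = (\<Sum>i<N. real (i choose (r - 1)) * real ((N - 1 - i) choose (m - r)) / real (N choose m))"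
      by (intro sum.cong) auto
    moreover have "{..<N} = {..N - 1}"
      using N by auto
    ultimately show ?thesis
      by (simp only: sum_divide_distrib)
  qed
  also have "\<dots> = 1"
  proof -
    have "Suc (N - 1) = N" "r - 1 + (m - r) + 1 = m"
      using assms N by auto
    then have "(\<Sum>i\<le>N - 1. (i choose (r - 1)) * ((N - 1 - i) choose (m - r))) = N choose m"
      using sum_choose_mult_choose_upper[where n="N - 1" and a="r - 1" and b="m - r"] by simp
    then show ?thesis
      using assms by (simp flip: of_nat_mult of_nat_sum)
  qed
  finally show ?thesis .
qed

lemma sum_inv_hyp_pmf_le_1:
  assumes "0 < r" "r \<le> m" "m \<le> N" "finite A"
  shows "(\<Sum>k\<in>A. inv_hyp_pmf N m r k) \<le> 1"
proof -
  have "(\<Sum>k\<in>A. inv_hyp_pmf N m r k) = (\<Sum>k\<in>A \<inter> {..N}. inv_hyp_pmf N m r k)"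
    using assms by (intro sum.mono_neutral_right) (auto simp: inv_hyp_pmf_def)
  also have "\<dots> \<le> (\<Sum>k\<le>N. inv_hyp_pmf N m r k)"
    by (intro sum_mono2) (auto simp: inv_hyp_pmf_nonneg)
  finally show ?thesis
    using sum_inv_hyp_pmf[OF assms(1-3)] by simp
qed

lemma inv_hyp_pmf_mult_mono:
  assumes "m \<le> h" "j \<le> k"
  shows "inv_hyp_pmf N m r j * inv_hyp_pmf N h r k \<le> inv_hyp_pmf N m r k * inv_hyp_pmf N h r j"
proof (cases "r \<le> j \<and> j \<le> N \<and> r \<le> k \<and> k \<le> N")
  case False
  then show ?thesis by (auto simp: inv_hyp_pmf_def)
next
  case True
  define c where "c = real ((j - 1) choose (r - 1)) * real ((k - 1) choose (r - 1))
     / (real (N choose m) * real (N choose h))"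
  have "((N - j) choose (m - r)) * ((N - k) choose (h - r))
      \<le> ((N - k) choose (m - r)) * ((N - j) choose (h - r))"
    using assms by (intro choose_mult_choose_mono) auto
  then have "c * (real ((N - j) choose (m - r)) * real ((N - k) choose (h - r)))
      \<le> c * (real ((N - k) choose (m - r)) * real ((N - j) choose (h - r)))"
    unfolding c_def by (intro mult_left_mono) (simp_all flip: of_nat_mult)
  then show ?thesis
    using True unfolding inv_hyp_pmf_def c_def by (simp add: field_simps)
qed

lemma inv_hyp_le_le_pmf_divide:
  assumes "0 < r" "M \<le> h" "r \<le> h" "h \<le> N" "inv_hyp_pmf N h r n > 0"
  shows "inv_hyp_le N M r n \<le> inv_hyp_pmf N M r n / inv_hyp_pmf N h r n"
  unfolding inv_hyp_le_def
proof (rule sum_le_divide_if_cross_le)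
  show "sum (inv_hyp_pmf N h r) {..n} \<le> 1"
    using assms by (intro sum_inv_hyp_pmf_le_1) auto
  show "inv_hyp_pmf N M r j * inv_hyp_pmf N h r n \<le> inv_hyp_pmf N M r n * inv_hyp_pmf N h r j"
    if "j \<in> {..n}" for j
    using that assms by (intro inv_hyp_pmf_mult_mono) auto
qed (use assms in \<open>auto simp: inv_hyp_pmf_nonneg\<close>)

lemma inv_hyp_ge_le_pmf_divide:
  assumes "0 < r" "h \<le> M" "r \<le> h" "h \<le> N" "inv_hyp_pmf N h r n > 0"
  shows "inv_hyp_ge N M r n \<le> inv_hyp_pmf N M r n / inv_hyp_pmf N h r n"
  unfolding inv_hyp_ge_def
proof (rule sum_le_divide_if_cross_le)
  show "sum (inv_hyp_pmf N h r) {n..N} \<le> 1"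
    using assms by (intro sum_inv_hyp_pmf_le_1) auto
  show "inv_hyp_pmf N M r j * inv_hyp_pmf N h r n \<le> inv_hyp_pmf N M r n * inv_hyp_pmf N h r j"
    if "j \<in> {n..N}" for j
    using inv_hyp_pmf_mult_mono[of h M n j N r] that assms by (simp add: mult.commute)
qed (use assms in \<open>auto simp: inv_hyp_pmf_nonneg\<close>)

lemma inv_hyp_pmf_divide:
  assumes "r \<le> n" "n \<le> N" "m \<le> N" "h \<le> N"
  shows "inv_hyp_pmf N m r n / inv_hyp_pmf N h r n
       = real (N choose h) * real ((N - n) choose (m - r))
         / (real (N choose m) * real ((N - n) choose (h - r)))"
  using assms by (simp add: inv_hyp_pmf_def field_simps)

lemma inv_hyp_pmf_ratio_eq:
  assumes "r \<le> m" "m \<le> N" "r \<le> h" "h \<le> N" "r \<le> n" "n \<le> N"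
  shows "real (N choose h) * real ((N - n) choose (m - r))
         / (real (N choose m) * real ((N - n) choose (h - r)))
       = real (m choose r) * real ((N - m) choose (n - r))
         / (real (h choose r) * real ((N - h) choose (n - r)))"
proof -
  define P where "P = real (N choose n) * real (n choose r)"
  have "P > 0"
    using assms unfolding P_def by simp
  have swap: "real (k choose r) * real ((N - k) choose (n - r))
            = P * real ((N - n) choose (k - r)) / real (N choose k)"
    if "r \<le> k" "k \<le> N" for k
  proof -
    have "real (N choose k) * (real (k choose r) * real ((N - k) choose (n - r)))
        = P * real ((N - n) choose (k - r))"
      using choose_mult_choose_mult_swap[OF that assms(5,6)] unfolding P_def
      by (simp add: mult.assoc flip: of_nat_mult)
    then show ?thesis
      using that by (simp add: field_simps)
  qed
  show ?thesis
    unfolding swap[OF assms(1,2)] swap[OF assms(3,4)] using \<open>P > 0\<close> by simp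
qed

lemma inv_hyp_le_bound:
  assumes "0 < r" "M \<le> h" "r \<le> h" "h \<le> N" "r \<le> n" "n \<le> N"
    and "(N - n) choose (h - r) \<noteq> 0"
  shows "inv_hyp_le N M r n \<le> real (N choose h) * real ((N - n) choose (M - r))
           / (real (N choose M) * real ((N - n) choose (h - r)))"
proof -
  have "inv_hyp_pmf N h r n > 0"
    using assms by (simp add: inv_hyp_pmf_pos_iff)
  then have "inv_hyp_le N M r n \<le> inv_hyp_pmf N M r n / inv_hyp_pmf N h r n"
    using assms by (intro inv_hyp_le_le_pmf_divide) auto
  also have "\<dots> = real (N choose h) * real ((N - n) choose (M - r))
                   / (real (N choose M) * real ((N - n) choose (h - r)))"
    using assms by (intro inv_hyp_pmf_divide) auto
  finally show ?thesis .
qed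

lemma inv_hyp_ge_bound:
  assumes "0 < r" "h \<le> M" "M \<le> N" "r \<le> h" "r \<le> n" "n \<le> N"
    and "(N - n) choose (h - r) \<noteq> 0"
  shows "inv_hyp_ge N M r n \<le> real (N choose h) * real ((N - n) choose (M - r))
           / (real (N choose M) * real ((N - n) choose (h - r)))"
proof -
  have "inv_hyp_pmf N h r n > 0"
    using assms by (simp add: inv_hyp_pmf_pos_iff)
  then have "inv_hyp_ge N M r n \<le> inv_hyp_pmf N M r n / inv_hyp_pmf N h r n"
    using assms by (intro inv_hyp_ge_le_pmf_divide) auto
  also have "\<dots> = real (N choose h) * real ((N - n) choose (M - r))
                   / (real (N choose M) * real ((N - n) choose (h - r)))"
    using assms by (intro inv_hyp_pmf_divide) auto
  finally show ?thesis .
qed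

theorem corollary6:
  fixes N M r :: nat and Mhat :: "nat \<Rightarrow> nat"
  assumes "0 < r" and "r \<le> M" and "M \<le> N"
    and "\<forall>k\<in>inv_hyp_support N M r. r \<le> Mhat k \<and> Mhat k \<le> N"
  shows "\<forall>n\<in>inv_hyp_support N M r.
     real (N choose Mhat n) * real ((N - n) choose (M - r))
       / (real (N choose M) * real ((N - n) choose (Mhat n - r)))
     = real (M choose r) * real ((N - M) choose (n - r))
       / (real (Mhat n choose r) * real ((N - Mhat n) choose (n - r)))
   \<and> (M \<le> Mhat n \<and> (N - n) choose (Mhat n - r) \<noteq> 0 \<longrightarrow>
       inv_hyp_le N M r n \<le> real (N choose Mhat n) * real ((N - n) choose (M - r))
         / (real (N choose M) * real ((N - n) choose (Mhat n - r))))
   \<and> (Mhat n \<le> M \<and> (N - n) choose (Mhat n - r) \<noteq> 0 \<longrightarrow>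
       inv_hyp_ge N M r n \<le> real (N choose Mhat n) * real ((N - n) choose (M - r))
         / (real (N choose M) * real ((N - n) choose (Mhat n - r))))"
proof -
  have "r \<le> n \<and> n \<le> N \<and> r \<le> Mhat n \<and> Mhat n \<le> N" if "n \<in> inv_hyp_support N M r" for n
    using that assms(4) by (auto simp: inv_hyp_support_def inv_hyp_pmf_pos_iff)
  then show ?thesis
    using assms(1-3) by (auto intro!: inv_hyp_pmf_ratio_eq inv_hyp_le_bound inv_hyp_ge_bound)
qed

end
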